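(* Let $(\mathcal X,d)$ be a clustering instance in a metric space $M$ and let $\gamma\ge 3$. Then the standard single-linkage algorithm on $(\mathcal X,d)$ outputs a tree $\mathcal T$ such that every $k$-clustering $\mathcal C^*=\{C_1^*,\dots,C_k^*\}$ of $\mathcal X$ that satisfies the $\gamma$-margin property (with centers $\mu_1,\dots,\mu_k\in M$) is a pruning of $\mathcal T$; i.e., for every $1\le i\le k$ there is a node $N_i$ of $\mathcal T$ with $C_i^*=N_i$.
   Context: Single linkage starts with all singletons of $\mathcal X$ and repeatedly merges the two current clusters $A,B$ minimizing $\min_{a\in A,b\in B}d(a,b)$ until one cluster remains; the tree $\mathcal T$ has as nodes all clusters formed (leaves are singletons, each merge creates a parent of the two merged nodes). A clustering with centers $\mu_1,\dots,\mu_k\in M$ is center-based if $x\in C_i\iff i=\arg\min_j d(x,\mu_j)$, and satisfies the $\gamma$-margin property if for all $i$, every $x\in C_i$, $y\in\mathcal X\setminus C_i$: $\gamma d(x,\mu_i)<d(y,\mu_i)$. *)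

theory Defs
  imports "HOL-Analysis.Analysis"
begin

definition linkage :: "'a::metric_space set \<Rightarrow> 'a set \<Rightarrow> real" where
  "linkage A B = Min {dist a b | a b. a \<in> A \<and> b \<in> B}"

text \<open>States of the single linkage algorithm on instance X:
  (P, T) where P is the current set of clusters and T the set of tree nodes
  created so far. Every possible tie-breaking is allowed.\<close>
inductive sl_state :: "'a::metric_space set \<Rightarrow> 'a set set \<Rightarrow> 'a set set \<Rightarrow> bool"
  for X :: "'a set" where
  init: "sl_state X ((\<lambda>x. {x}) ` X) ((\<lambda>x. {x}) ` X)"
| merge: "\<lbrakk> sl_state X P T; A \<in> P; B \<in> P; A \<noteq> B;
            \<forall>A'\<in>P. \<forall>B'\<in>P. A' \<noteq> B' \<longrightarrow> linkage A B \<le> linkage A' B' \<rbrakk>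
          \<Longrightarrow> sl_state X (insert (A \<union> B) (P - {A, B})) (insert (A \<union> B) T)"

definition single_linkage_output :: "'a::metric_space set \<Rightarrow> 'a set set \<Rightarrow> bool" where
  "single_linkage_output X T \<longleftrightarrow> (\<exists>P. sl_state X P T \<and> card P = 1)"

definition k_clustering :: "'a set \<Rightarrow> nat \<Rightarrow> (nat \<Rightarrow> 'a set) \<Rightarrow> bool" where
  "k_clustering X k C \<longleftrightarrow>
     (\<forall>i<k. C i \<noteq> {} \<and> C i \<subseteq> X) \<and>
     (\<forall>i<k. \<forall>j<k. i \<noteq> j \<longrightarrow> C i \<inter> C j = {}) \<and>
     (\<Union>i<k. C i) = X"

definition center_based :: "'a::metric_space set \<Rightarrow> nat \<Rightarrow> (nat \<Rightarrow> 'a set) \<Rightarrow> (nat \<Rightarrow> 'a) \<Rightarrow> bool" where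
  "center_based X k C \<mu> \<longleftrightarrow>
     (\<forall>x\<in>X. \<forall>i<k. x \<in> C i \<longleftrightarrow> (\<forall>j<k. j \<noteq> i \<longrightarrow> dist x (\<mu> i) < dist x (\<mu> j)))"

definition gamma_margin :: "real \<Rightarrow> 'a::metric_space set \<Rightarrow> nat \<Rightarrow> (nat \<Rightarrow> 'a set) \<Rightarrow> (nat \<Rightarrow> 'a) \<Rightarrow> bool" where
  "gamma_margin \<gamma> X k C \<mu> \<longleftrightarrow>
     (\<forall>i<k. \<forall>x\<in>C i. \<forall>y\<in>X - C i. \<gamma> * dist x (\<mu> i) < dist y (\<mu> i))"

end

theory Submission
  imports Defs
begin

text \<open>Call a cluster \<open>C \<subseteq> X\<close> strictly separated if every point of \<open>C\<close> is closer to all of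
  \<open>C\<close> than to any point outside. With \<open>\<gamma> \<ge> 3\<close> each cluster of a \<open>\<gamma>\<close>-margin clustering is
  strictly separated. Single linkage never merges
  a proper part of a strictly separated cluster with a cluster outside it: the part is
  strictly closer to the rest of \<open>C\<close>. Hence, as long as \<open>C\<close> has not been formed, every
  current cluster meeting \<open>C\<close> lies inside \<open>C\<close>; since the run ends with the cluster \<open>X\<close>,
  \<open>C\<close> must appear as a node.\<close>

definition strictly_separated :: "'a::metric_space set \<Rightarrow> 'a set \<Rightarrow> bool" where
  "strictly_separated X C \<longleftrightarrow> (\<forall>a\<in>C. \<forall>a'\<in>C. \<forall>b\<in>X - C. dist a a' < dist a b)"

lemma partition_on_merge:
  assumes "partition_on X P" "A \<in> P" "B \<in> P"
  shows "partition_on X (insert (A \<union> B) (P - {A, B}))"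
proof (rule partition_onI)
  show "\<Union>(insert (A \<union> B) (P - {A, B})) = X"
    using assms partition_onD1 by blast
  show "{} \<notin> insert (A \<union> B) (P - {A, B})"
    using partition_onD3[OF assms(1)] assms(2) by auto
  have disj: "disjnt D E" if "D \<in> P" "E \<in> P" "D \<noteq> E" for D E
    using partition_onD2[OF assms(1)] that unfolding pairwise_def by blast
  fix p q
  assume "p \<in> insert (A \<union> B) (P - {A, B})" "q \<in> insert (A \<union> B) (P - {A, B})" "p \<noteq> q"
  then consider "p = A \<union> B" "q \<in> P - {A, B}" | "q = A \<union> B" "p \<in> P - {A, B}" | "p \<in> P" "q \<in> P"
    by blast
  then show "disjnt p q"
    by cases (use disj assms(2,3) \<open>p \<noteq> q\<close> in \<open>auto simp: disjnt_sym\<close>)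
qed

lemma sl_state_partition_on:
  assumes "sl_state X P T"
  shows "partition_on X P \<and> P \<subseteq> T"
  using assms
proof (induction rule: sl_state.induct)
  case init
  then show ?case
    by (simp add: partition_on_singletons)
next
  case (merge P T A B)
  have "partition_on X P" "P \<subseteq> T"
    using merge.IH by simp_all
  then show ?case
    using partition_on_merge[OF _ merge.hyps(2,3)] by fast
qed

lemma single_linkage_output_root:
  assumes "single_linkage_output X T" "X \<noteq> {}"
  shows "sl_state X {X} T"
proof -
  obtain P where P: "sl_state X P T" "card P = 1"
    using assms(1) unfolding single_linkage_output_def by blast
  then obtain A where "P = {A}"
    using card_1_singletonE by blast
  moreover have "\<Union>P = X"
    using sl_state_partition_on[OF P(1)] partition_onD1 by blast
  ultimately show ?thesis
    using P(1) by simp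
qed

lemma linkage_eq_Min_image: "linkage A B = Min (case_prod dist ` (A \<times> B))"
proof -
  have "{dist a b | a b. a \<in> A \<and> b \<in> B} = case_prod dist ` (A \<times> B)"
    by auto
  then show ?thesis
    unfolding linkage_def by simp
qed

lemma linkage_commute: "linkage A B = linkage B A"
proof -
  have "case_prod dist \<circ> prod.swap = case_prod dist"
    by (simp add: fun_eq_iff dist_commute)
  then have "case_prod dist ` (A \<times> B) = case_prod dist ` (B \<times> A)"
    by (metis image_comp product_swap)
  then show ?thesis
    unfolding linkage_eq_Min_image by simp
qed

lemma linkage_le_dist:
  assumes "finite A" "finite B" "a \<in> A" "b \<in> B"
  shows "linkage A B \<le> dist a b"
  unfolding linkage_eq_Min_image using assms by (intro Min_le) auto

lemma linkage_attained:
  assumes "finite A" "finite B" "A \<noteq> {}" "B \<noteq> {}"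
  obtains a b where "a \<in> A" "b \<in> B" "linkage A B = dist a b"
proof -
  have "linkage A B \<in> case_prod dist ` (A \<times> B)"
    unfolding linkage_eq_Min_image using assms by (intro Min_in) auto
  then show ?thesis
    using that by auto
qed

text \<open>With \<open>m = max (dist a \<mu>) (dist a' \<mu>)\<close>: \<open>dist b \<mu> > 3 m\<close>, so \<open>dist a b > 2 m \<ge> dist a a'\<close>.\<close>

lemma gamma_margin_strictly_separated:
  fixes \<mu> :: "'a::metric_space"
  assumes "\<gamma> \<ge> 3" and margin: "\<forall>x\<in>C. \<forall>y\<in>X - C. \<gamma> * dist x \<mu> < dist y \<mu>"
  shows "strictly_separated X C"
  unfolding strictly_separated_def
proof (intro ballI)
  fix a a' b
  assume "a \<in> C" "a' \<in> C" "b \<in> X - C"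
  then have "\<gamma> * dist a \<mu> < dist b \<mu>" "\<gamma> * dist a' \<mu> < dist b \<mu>"
    using margin by blast+
  moreover have "3 * dist a \<mu> \<le> \<gamma> * dist a \<mu>" "3 * dist a' \<mu> \<le> \<gamma> * dist a' \<mu>"
    using \<open>\<gamma> \<ge> 3\<close> by (simp_all add: mult_right_mono)
  moreover have "dist b \<mu> \<le> dist a b + dist a \<mu>" "dist a a' \<le> dist a \<mu> + dist a' \<mu>"
    by (metis dist_commute dist_triangle)+
  ultimately show "dist a a' < dist a b"
    by linarith
qed

lemma linkage_to_rest_of_separated_cluster_smaller:
  assumes "finite X" "partition_on X P" "strictly_separated X C" "C \<subseteq> X"
    and "A \<in> P" "B \<in> P" "A \<subset> C" "B \<inter> C = {}"
  shows "\<exists>A'\<in>P. A' \<noteq> A \<and> linkage A A' < linkage A B"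
proof -
  obtain c where c: "c \<in> C" "c \<notin> A"
    using \<open>A \<subset> C\<close> by blast
  then obtain A' where A': "A' \<in> P" "c \<in> A'"
    using \<open>C \<subseteq> X\<close> partition_onD1[OF assms(2)] by blast
  have fin: "finite D" if "D \<in> P" for D
    using that \<open>finite X\<close> partition_onD1[OF assms(2)] by (metis Union_upper finite_subset)
  have "A \<noteq> {}" "B \<noteq> {}"
    using assms(2,5,6) partition_onD3 by blast+
  then obtain a b where ab: "a \<in> A" "b \<in> B" "linkage A B = dist a b"
    using linkage_attained fin assms(5,6) by metis
  have "b \<in> X - C"
    using ab(2) \<open>B \<in> P\<close> \<open>B \<inter> C = {}\<close> partition_onD1[OF assms(2)] by blast
  then have "dist a c < dist a b"
    using \<open>strictly_separated X C\<close> ab(1) \<open>A \<subset> C\<close> c(1) unfolding strictly_separated_def by blast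
  moreover have "linkage A A' \<le> dist a c"
    using linkage_le_dist fin assms(5) A' ab(1) by metis
  ultimately show ?thesis
    using A' c ab(3) by auto
qed

lemma sl_state_strictly_separated:
  assumes "sl_state X P T" "finite X" "strictly_separated X C" "C \<subseteq> X"
  shows "C \<in> T \<or> (\<forall>A\<in>P. A \<inter> C \<noteq> {} \<longrightarrow> A \<subseteq> C)"
  using assms(1)
proof (induction rule: sl_state.induct)
  case init
  then show ?case by auto
next
  case (merge P T A B)
  have P: "partition_on X P" "P \<subseteq> T"
    using sl_state_partition_on[OF merge.hyps(1)] by auto
  show ?case
  proof (cases "C \<in> T")
    case True
    then show ?thesis by simp
  next
    case False
    with merge.IH have inside: "\<forall>D\<in>P. D \<inter> C \<noteq> {} \<longrightarrow> D \<subseteq> C"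
      by simp
    have not_crossing: "\<not> (D \<inter> C \<noteq> {} \<and> E \<inter> C = {})"
      if D: "D \<in> P" and E: "E \<in> P" and le: "linkage D E \<le> linkage A B"
        and min: "\<forall>A'\<in>P. \<forall>B'\<in>P. A' \<noteq> B' \<longrightarrow> linkage A B \<le> linkage A' B'" for D E
    proof
      assume "D \<inter> C \<noteq> {} \<and> E \<inter> C = {}"
      moreover have "D \<noteq> C"
        using \<open>C \<notin> T\<close> \<open>D \<in> P\<close> P(2) by blast
      ultimately have "D \<subset> C" "E \<inter> C = {}"
        using inside \<open>D \<in> P\<close> by auto
      then obtain A' where "A' \<in> P" "A' \<noteq> D" "linkage D A' < linkage D E"
        using linkage_to_rest_of_separated_cluster_smaller[OF assms(2) P(1) assms(3,4) D E] by blast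
      then show False
        using min D le by force
    qed
    have "\<not> (A \<inter> C \<noteq> {} \<and> B \<inter> C = {})"
      using not_crossing[OF merge.hyps(2,3) order_refl merge.hyps(5)] .
    moreover have "\<not> (B \<inter> C \<noteq> {} \<and> A \<inter> C = {})"
      using not_crossing[OF merge.hyps(3,2) _ merge.hyps(5)] linkage_commute[of B A] by simp
    ultimately have "(A \<union> B) \<inter> C \<noteq> {} \<longrightarrow> A \<union> B \<subseteq> C"
      using inside merge.hyps(2,3) by blast
    then show ?thesis
      using inside by blast
  qed
qed

lemma single_linkage_output_strictly_separated:
  assumes "single_linkage_output X T" "finite X" "strictly_separated X C" "C \<subseteq> X" "C \<noteq> {}"
  shows "C \<in> T"
proof -
  have "sl_state X {X} T"
    using single_linkage_output_root assms(1,4,5) by blast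
  then have "C \<in> T \<or> X \<subseteq> C"
    using sl_state_strictly_separated assms(2-5) by blast
  moreover have "X \<in> T"
    using sl_state_partition_on[OF \<open>sl_state X {X} T\<close>] by simp
  ultimately show ?thesis
    using \<open>C \<subseteq> X\<close> subset_antisym by metis
qed

theorem theorem7:
  fixes X :: "'a::metric_space set" and \<gamma> :: real and T :: "'a set set"
  assumes "finite X" and "X \<noteq> {}" and "\<gamma> \<ge> 3"
    and "single_linkage_output X T"
  shows "\<forall>k (C :: nat \<Rightarrow> 'a set) (\<mu> :: nat \<Rightarrow> 'a).
           k \<ge> 1 \<and> k_clustering X k C \<and> center_based X k C \<mu> \<and> gamma_margin \<gamma> X k C \<mu>
           \<longrightarrow> (\<forall>i<k. C i \<in> T)"
proof (intro allI impI)
  fix k C \<mu> i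
  assume H: "k \<ge> 1 \<and> k_clustering X k C \<and> center_based X k C \<mu> \<and> gamma_margin \<gamma> X k C \<mu>"
    and "i < k"
  then have "C i \<noteq> {}" "C i \<subseteq> X"
    unfolding k_clustering_def by auto
  moreover have "strictly_separated X (C i)"
    using H \<open>i < k\<close> \<open>\<gamma> \<ge> 3\<close> gamma_margin_strictly_separated
    unfolding gamma_margin_def by blast
  ultimately show "C i \<in> T"
    using single_linkage_output_strictly_separated assms(1,4) by blast
qed

end
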